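(* Fix $a\ge0$, $b>0$ and $N\ge2$. Then for all $M$ large enough, $$P_o(\xi_t\ne\mathbf 0\ \forall t>0)\le\begin{cases}M^{-1/3}\big(1/2+bN(1-a/4)^{-1}\big)&\text{if }a<4,\\ M^{-1/3}\big(1/2+(b/2)(N+2)^2\big)&\text{if }a=4,\\ M^{-1/3}\big(1/2+b(a/4-1)^{-2}(a/4)^{N+2}\big)&\text{if }a>4.\end{cases}$$
   Context: For $x,y\in\mathbb Z$ write $y\sim x$ iff $0<|x-y|\le M$. The $N$-patch model (patch size $N\ge2$, inner birth rate $a$, outer birth rate $b$, dispersal range $M$) is the continuous-time Markov process $\xi_t\in\{0,1,\dots,N\}^{\mathbb Z}$ with transitions: $\xi(x)\to\xi(x)-1$ at rate $\xi(x)$, and $\xi(x)\to\xi(x)+1$ at rate $$\frac{a}{N(N-1)}\xi(x)(\xi(x)-1)(N-\xi(x))+\sum_{y\sim x}\frac{b}{2M\,N(N-1)}\xi(y)(\xi(y)-1)(N-\xi(x)).$$ $\mathbf 0$ is the all-empty configuration, and $P_o$ is the law of the process started from $\xi_0(0)=N$, $\xi_0(x)=0$ for $x\neq0$. *)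

theory Defs
  imports Complex_Main
begin

text \<open>Configurations are maps int => nat. The N-patch model is encoded through its
embedded jump chain.\<close>

definition death_rate :: "(int \<Rightarrow> nat) \<Rightarrow> int \<Rightarrow> real" where
  "death_rate \<xi> x = real (\<xi> x)"

definition birth_rate :: "nat \<Rightarrow> real \<Rightarrow> real \<Rightarrow> nat \<Rightarrow> (int \<Rightarrow> nat) \<Rightarrow> int \<Rightarrow> real" where
  "birth_rate N a b M \<xi> x =
     a / (real N * (real N - 1)) * real (\<xi> x) * (real (\<xi> x) - 1) * (real N - real (\<xi> x))
   + (\<Sum>y\<in>{y. 0 < \<bar>x - y\<bar> \<and> \<bar>x - y\<bar> \<le> int M}.
        b / (2 * real M * real N * (real N - 1)) * real (\<xi> y) * (real (\<xi> y) - 1)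
          * (real N - real (\<xi> x)))"

text \<open>Sites where some transition can have positive rate: within distance M of an occupied site.\<close>
definition active_sites :: "nat \<Rightarrow> (int \<Rightarrow> nat) \<Rightarrow> int set" where
  "active_sites M \<xi> = {x. \<exists>y. \<xi> y \<noteq> 0 \<and> \<bar>x - y\<bar> \<le> int M}"

definition total_rate :: "nat \<Rightarrow> real \<Rightarrow> real \<Rightarrow> nat \<Rightarrow> (int \<Rightarrow> nat) \<Rightarrow> real" where
  "total_rate N a b M \<xi> = (\<Sum>x\<in>active_sites M \<xi>. death_rate \<xi> x + birth_rate N a b M \<xi> x)"

primrec survive_steps :: "nat \<Rightarrow> nat \<Rightarrow> real \<Rightarrow> real \<Rightarrow> nat \<Rightarrow> (int \<Rightarrow> nat) \<Rightarrow> real" where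
  "survive_steps 0 N a b M \<xi> = (if \<xi> = (\<lambda>_. 0) then 0 else 1)"
| "survive_steps (Suc n) N a b M \<xi> =
     (if \<xi> = (\<lambda>_. 0) then 0 else
       (\<Sum>x\<in>active_sites M \<xi>.
          death_rate \<xi> x / total_rate N a b M \<xi> * survive_steps n N a b M (\<xi>(x := \<xi> x - 1))
        + birth_rate N a b M \<xi> x / total_rate N a b M \<xi> * survive_steps n N a b M (\<xi>(x := Suc (\<xi> x)))))"

definition init_config :: "nat \<Rightarrow> int \<Rightarrow> nat" where
  "init_config N = (\<lambda>x. if x = 0 then N else 0)"

text \<open>P_o(xi_t /= 0 for all t > 0) = probability that the jump chain never hits 0.\<close>
definition survival_prob :: "nat \<Rightarrow> real \<Rightarrow> real \<Rightarrow> nat \<Rightarrow> real" where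
  "survival_prob N a b M = (INF n. survive_steps n N a b M (init_config N))"

end

theory Submission
  imports Defs
begin

text \<open>
  Call a configuration sparse if every site other than the origin carries at most one particle.
  Outer particles cannot reproduce (a birth needs two parents on one patch), so the chain leaves
  the sparse configurations only through an outer birth onto an occupied singleton, at rate
  O(b/M). Potentials alpha * #(outer singletons) + beta * ((a+2)^N - (a+2)^(N-k)), with k the
  occupancy of the origin, make this quantitative: for one choice of coefficients the potential
  decreases by at least 1 in expectation per jump from a sparse configuration, for another it is
  a supermartingale there, equals 1 off the sparse configurations and starts at O(1/M). Together
  they show that the jump chain survives forever with probability O(1/M), which is eventually
  below the M^(-1/3) bound.
\<close>

definition admissible :: "nat \<Rightarrow> (int \<Rightarrow> nat) \<Rightarrow> bool" where
  "admissible N \<xi> \<longleftrightarrow> finite {x. \<xi> x \<noteq> 0} \<and> (\<forall>x. \<xi> x \<le> N)"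

lemma finite_active_sites:
  assumes "finite {x. \<xi> x \<noteq> 0}"
  shows "finite (active_sites M \<xi>)"
proof -
  have "active_sites M \<xi> \<subseteq> (\<Union>y\<in>{x. \<xi> x \<noteq> 0}. {y - int M .. y + int M})"
    unfolding active_sites_def by (fastforce simp: abs_le_iff)
  moreover have "finite (\<Union>y\<in>{x. \<xi> x \<noteq> 0}. {y - int M .. y + int M})"
    using assms by simp
  ultimately show ?thesis by (rule finite_subset)
qed

lemma real_mult_pred_nonneg: "0 \<le> real n * (real n - 1)"
  by (cases n) auto

lemma birth_rate_nonneg:
  assumes "a \<ge> 0" "b \<ge> 0" "N \<ge> 2" "\<xi> x \<le> N"
  shows "0 \<le> birth_rate N a b M \<xi> x"
proof -
  have term_nonneg: "0 \<le> c * real k * (real k - 1) * (real N - real (\<xi> x))"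
    if "0 \<le> c" for c :: real and k
  proof -
    have "0 \<le> c * (real k * (real k - 1)) * (real N - real (\<xi> x))"
      using that assms real_mult_pred_nonneg[of k] by simp
    then show ?thesis by (simp only: mult.assoc)
  qed
  show ?thesis
    unfolding birth_rate_def using assms
    by (intro add_nonneg_nonneg sum_nonneg term_nonneg) auto
qed

lemma birth_rate_full_patch: "\<xi> x = N \<Longrightarrow> birth_rate N a b M \<xi> x = 0"
  unfolding birth_rate_def by simp

lemma admissible_death:
  assumes "admissible N \<xi>"
  shows "admissible N (\<xi>(x := \<xi> x - 1))"
proof -
  have "{y. (\<xi>(x := \<xi> x - 1)) y \<noteq> 0} \<subseteq> {y. \<xi> y \<noteq> 0}" by auto
  moreover have "(\<xi>(x := \<xi> x - 1)) y \<le> N" for y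
    using assms unfolding admissible_def by (metis diff_le_self fun_upd_apply order_trans)
  ultimately show ?thesis
    using assms unfolding admissible_def by (meson finite_subset)
qed

lemma admissible_birth:
  assumes "admissible N \<xi>" "\<xi> x < N"
  shows "admissible N (\<xi>(x := Suc (\<xi> x)))"
proof -
  have "{y. (\<xi>(x := Suc (\<xi> x))) y \<noteq> 0} \<subseteq> insert x {y. \<xi> y \<noteq> 0}" by auto
  then show ?thesis
    using assms unfolding admissible_def by (simp add: finite_subset)
qed

definition jump_mean :: "nat \<Rightarrow> real \<Rightarrow> real \<Rightarrow> nat \<Rightarrow> ((int \<Rightarrow> nat) \<Rightarrow> real) \<Rightarrow> (int \<Rightarrow> nat) \<Rightarrow> real" where
  "jump_mean N a b M g \<xi> = (\<Sum>x\<in>active_sites M \<xi>.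
      death_rate \<xi> x / total_rate N a b M \<xi> * g (\<xi>(x := \<xi> x - 1))
    + birth_rate N a b M \<xi> x / total_rate N a b M \<xi> * g (\<xi>(x := Suc (\<xi> x))))"

lemma survive_steps_empty: "survive_steps n N a b M (\<lambda>_. 0) = 0"
  by (cases n) auto

lemma survive_steps_Suc_nonempty:
  "\<xi> \<noteq> (\<lambda>_. 0) \<Longrightarrow> survive_steps (Suc n) N a b M \<xi> = jump_mean N a b M (survive_steps n N a b M) \<xi>"
  by (simp add: jump_mean_def)

lemma jump_mean_add_scaled:
  "jump_mean N a b M (\<lambda>\<eta>. g \<eta> + c * h \<eta>) \<xi> = jump_mean N a b M g \<xi> + c * jump_mean N a b M h \<xi>"
  by (simp add: jump_mean_def sum.distrib sum_distrib_left algebra_simps)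

lemma jump_mean_sum:
  "jump_mean N a b M (\<lambda>\<eta>. \<Sum>j\<in>J. g j \<eta>) \<xi> = (\<Sum>j\<in>J. jump_mean N a b M (g j) \<xi>)"
  unfolding jump_mean_def by (subst sum.swap) (simp add: sum_distrib_left sum.distrib)

definition site_drift ::
    "nat \<Rightarrow> real \<Rightarrow> real \<Rightarrow> nat \<Rightarrow> ((int \<Rightarrow> nat) \<Rightarrow> real) \<Rightarrow> real \<Rightarrow> (int \<Rightarrow> nat) \<Rightarrow> int \<Rightarrow> real" where
  "site_drift N a b M g c \<xi> x =
     death_rate \<xi> x * (g (\<xi>(x := \<xi> x - 1)) - g \<xi>)
   + birth_rate N a b M \<xi> x * (g (\<xi>(x := Suc (\<xi> x))) - g \<xi>)
   + c * (death_rate \<xi> x + birth_rate N a b M \<xi> x)"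

lemma jump_mean_eq_drift:
  assumes "total_rate N a b M \<xi> \<noteq> 0"
  shows "jump_mean N a b M g \<xi> =
    g \<xi> - c + (\<Sum>x\<in>active_sites M \<xi>. site_drift N a b M g c \<xi> x) / total_rate N a b M \<xi>"
proof -
  let ?R = "total_rate N a b M \<xi>"
  have "(\<Sum>x\<in>active_sites M \<xi>. site_drift N a b M g c \<xi> x)
      = (\<Sum>x\<in>active_sites M \<xi>. death_rate \<xi> x * g (\<xi>(x := \<xi> x - 1))
          + birth_rate N a b M \<xi> x * g (\<xi>(x := Suc (\<xi> x)))) - (g \<xi> - c) * ?R"
    unfolding site_drift_def total_rate_def
    by (simp add: sum_subtractf sum.distrib sum_distrib_left algebra_simps)
  moreover have "jump_mean N a b M g \<xi> = (\<Sum>x\<in>active_sites M \<xi>. death_rate \<xi> x * g (\<xi>(x := \<xi> x - 1))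
          + birth_rate N a b M \<xi> x * g (\<xi>(x := Suc (\<xi> x)))) / ?R"
    unfolding jump_mean_def by (simp add: sum_divide_distrib add_divide_distrib)
  ultimately show ?thesis
    using assms by (simp add: field_simps)
qed

lemma jump_mean_le_of_site_drift:
  assumes "total_rate N a b M \<xi> > 0"
    and "(\<Sum>x\<in>active_sites M \<xi>. site_drift N a b M g c \<xi> x) \<le> 0"
  shows "jump_mean N a b M g \<xi> \<le> g \<xi> - c"
  using assms jump_mean_eq_drift[of N a b M \<xi> g c] by (simp add: divide_nonpos_pos)

lemma nonpos_of_multiples_bounded:
  fixes x c :: real
  assumes "\<And>n. real n * x \<le> c"
  shows "x \<le> 0"
proof (rule ccontr)
  assume "\<not> x \<le> 0"
  then obtain n where "c < real n * x"
    using reals_Archimedean3[of x] by force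
  with assms[of n] show False by simp
qed

locale patch_model =
  fixes N :: nat and a b :: real and M :: nat
  assumes a_nonneg: "a \<ge> 0" and b_pos: "b > 0" and N_ge_2: "N \<ge> 2" and M_pos: "M \<ge> 1"
begin

lemma total_rate_pos:
  assumes "admissible N \<xi>" "\<xi> \<noteq> (\<lambda>_. 0)"
  shows "0 < total_rate N a b M \<xi>"
proof -
  obtain z where z: "\<xi> z \<noteq> 0" using assms(2) by auto
  have rate_nonneg: "0 \<le> death_rate \<xi> x + birth_rate N a b M \<xi> x" for x
    using birth_rate_nonneg[OF a_nonneg _ N_ge_2] b_pos assms(1)
    unfolding admissible_def death_rate_def by (simp add: add_nonneg_nonneg less_imp_le)
  have "0 < death_rate \<xi> z + birth_rate N a b M \<xi> z"
    using birth_rate_nonneg[OF a_nonneg less_imp_le[OF b_pos] N_ge_2, of \<xi> z M] assms(1) z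
    unfolding admissible_def death_rate_def by (simp add: add_pos_nonneg)
  also have "\<dots> \<le> total_rate N a b M \<xi>"
    unfolding total_rate_def using z assms(1) rate_nonneg
    by (intro member_le_sum finite_active_sites) (auto simp: active_sites_def admissible_def)
  finally show ?thesis .
qed

lemma jump_mean_mono:
  assumes "admissible N \<xi>" "\<And>\<eta>. admissible N \<eta> \<Longrightarrow> g \<eta> \<le> h \<eta>"
  shows "jump_mean N a b M g \<xi> \<le> jump_mean N a b M h \<xi>"
proof -
  have R: "0 \<le> total_rate N a b M \<xi>"
    unfolding total_rate_def
    using birth_rate_nonneg[OF a_nonneg _ N_ge_2] b_pos assms(1)
    unfolding admissible_def death_rate_def
    by (intro sum_nonneg add_nonneg_nonneg) auto
  show ?thesis
    unfolding jump_mean_def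
  proof (rule sum_mono, rule add_mono)
    fix x
    show "death_rate \<xi> x / total_rate N a b M \<xi> * g (\<xi>(x := \<xi> x - 1))
        \<le> death_rate \<xi> x / total_rate N a b M \<xi> * h (\<xi>(x := \<xi> x - 1))"
      using R assms admissible_death[OF assms(1)] unfolding death_rate_def
      by (intro mult_left_mono) auto
    show "birth_rate N a b M \<xi> x / total_rate N a b M \<xi> * g (\<xi>(x := Suc (\<xi> x)))
        \<le> birth_rate N a b M \<xi> x / total_rate N a b M \<xi> * h (\<xi>(x := Suc (\<xi> x)))"
    proof (cases "\<xi> x < N")
      case True
      then show ?thesis
        using R assms admissible_birth[OF assms(1) True] b_pos
          birth_rate_nonneg[OF a_nonneg less_imp_le[OF b_pos] N_ge_2, of \<xi> x]
        by (intro mult_left_mono) auto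
    next
      case False
      then have "\<xi> x = N"
        using assms(1) unfolding admissible_def by (meson le_antisym not_less)
      then show ?thesis by (simp add: birth_rate_full_patch)
    qed
  qed
qed

lemma jump_mean_const:
  assumes "admissible N \<xi>" "\<xi> \<noteq> (\<lambda>_. 0)"
  shows "jump_mean N a b M (\<lambda>_. c) \<xi> = c"
  using jump_mean_eq_drift[of N a b M \<xi> "\<lambda>_. c" 0] total_rate_pos[OF assms]
  by (simp add: site_drift_def)

lemma survive_steps_bounds:
  assumes "admissible N \<xi>"
  shows "0 \<le> survive_steps n N a b M \<xi> \<and> survive_steps n N a b M \<xi> \<le> 1"
  using assms
proof (induction n arbitrary: \<xi>)
  case 0
  then show ?case by simp
next
  case (Suc n)
  show ?case
  proof (cases "\<xi> = (\<lambda>_. 0)")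
    case True
    then show ?thesis by (simp add: survive_steps_empty)
  next
    case False
    have "jump_mean N a b M (\<lambda>_. 0) \<xi> \<le> jump_mean N a b M (survive_steps n N a b M) \<xi>"
      and "jump_mean N a b M (survive_steps n N a b M) \<xi> \<le> jump_mean N a b M (\<lambda>_. 1) \<xi>"
      using Suc by (auto intro: jump_mean_mono)
    then show ?thesis
      using jump_mean_const[OF Suc.prems False] survive_steps_Suc_nonempty[OF False] by simp
  qed
qed

text \<open>
  Foster--Lyapunov bound: inside G the potential T pays for every jump, and H, a supermartingale
  on G that dominates the indicator of the complement of G, pays for leaving G.
\<close>

lemma survive_steps_sum_le:
  assumes T_nonneg: "\<And>\<eta>. 0 \<le> T \<eta>" and H_nonneg: "\<And>\<eta>. 0 \<le> H \<eta>"
    and T_drift: "\<And>\<eta>. G \<eta> \<Longrightarrow> \<eta> \<noteq> (\<lambda>_. 0) \<Longrightarrow> jump_mean N a b M T \<eta> \<le> T \<eta> - 1"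
    and H_drift: "\<And>\<eta>. G \<eta> \<Longrightarrow> \<eta> \<noteq> (\<lambda>_. 0) \<Longrightarrow> jump_mean N a b M H \<eta> \<le> H \<eta>"
    and H_outside: "\<And>\<eta>. \<not> G \<eta> \<Longrightarrow> 1 \<le> H \<eta>"
    and "admissible N \<xi>"
  shows "(\<Sum>j<n. survive_steps j N a b M \<xi>) \<le> T \<xi> + real n * H \<xi>"
  using \<open>admissible N \<xi>\<close>
proof (induction n arbitrary: \<xi>)
  case 0
  then show ?case using T_nonneg by simp
next
  case (Suc n)
  consider "\<xi> = (\<lambda>_. 0)" | "\<not> G \<xi>" | "G \<xi>" "\<xi> \<noteq> (\<lambda>_. 0)" by blast
  then show ?case
  proof cases
    case 1
    then show ?thesis
      using T_nonneg H_nonneg by (simp add: survive_steps_empty add_nonneg_nonneg)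
  next
    case 2
    have "(\<Sum>j<Suc n. survive_steps j N a b M \<xi>) \<le> (\<Sum>j<Suc n. 1)"
      using survive_steps_bounds[OF Suc.prems] by (intro sum_mono) auto
    also have "\<dots> = real (Suc n) * 1" by simp
    also have "\<dots> \<le> real (Suc n) * H \<xi>"
      using H_outside[OF 2] by (intro mult_left_mono) auto
    finally show ?thesis using T_nonneg[of \<xi>] by linarith
  next
    case 3
    have "(\<Sum>j<Suc n. survive_steps j N a b M \<xi>)
        = survive_steps 0 N a b M \<xi> + (\<Sum>j<n. survive_steps (Suc j) N a b M \<xi>)"
      by (rule sum.lessThan_Suc_shift)
    also have "\<dots> = 1 + jump_mean N a b M (\<lambda>\<eta>. \<Sum>j<n. survive_steps j N a b M \<eta>) \<xi>"
      using 3 by (simp add: survive_steps_Suc_nonempty jump_mean_sum del: survive_steps.simps(2))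
    also have "\<dots> \<le> 1 + jump_mean N a b M (\<lambda>\<eta>. T \<eta> + real n * H \<eta>) \<xi>"
      using Suc.IH Suc.prems by (simp add: jump_mean_mono)
    also have "\<dots> = 1 + jump_mean N a b M T \<xi> + real n * jump_mean N a b M H \<xi>"
      by (simp add: jump_mean_add_scaled)
    also have "\<dots> \<le> 1 + (T \<xi> - 1) + real n * H \<xi>"
      using T_drift[OF 3] H_drift[OF 3] by (intro add_mono mult_left_mono) auto
    also have "\<dots> \<le> T \<xi> + real (Suc n) * H \<xi>"
      using H_nonneg[of \<xi>] by (simp add: algebra_simps)
    finally show ?thesis .
  qed
qed

lemma survival_prob_le_potential:
  assumes "\<And>\<eta>. 0 \<le> T \<eta>" "\<And>\<eta>. 0 \<le> H \<eta>"
    and "\<And>\<eta>. G \<eta> \<Longrightarrow> \<eta> \<noteq> (\<lambda>_. 0) \<Longrightarrow> jump_mean N a b M T \<eta> \<le> T \<eta> - 1"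
    and "\<And>\<eta>. G \<eta> \<Longrightarrow> \<eta> \<noteq> (\<lambda>_. 0) \<Longrightarrow> jump_mean N a b M H \<eta> \<le> H \<eta>"
    and "\<And>\<eta>. \<not> G \<eta> \<Longrightarrow> 1 \<le> H \<eta>"
    and init: "admissible N (init_config N)"
  shows "survival_prob N a b M \<le> H (init_config N)"
proof -
  let ?f = "\<lambda>n. survive_steps n N a b M (init_config N)"
  have "bdd_below (range ?f)"
    using survive_steps_bounds[OF init] by (intro bdd_belowI[of _ 0]) auto
  then have le_f: "survival_prob N a b M \<le> ?f n" for n
    unfolding survival_prob_def by (rule cINF_lower) simp
  have "real n * (survival_prob N a b M - H (init_config N)) \<le> T (init_config N)" for n
  proof -
    have "real n * survival_prob N a b M \<le> (\<Sum>j<n. ?f j)"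
      using sum_mono[of "{..<n}" "\<lambda>_. survival_prob N a b M" ?f] le_f by simp
    also have "\<dots> \<le> T (init_config N) + real n * H (init_config N)"
      using assms by (rule survive_steps_sum_le)
    finally show ?thesis by (simp add: algebra_simps)
  qed
  then show ?thesis
    using nonpos_of_multiples_bounded by fastforce
qed

end

definition sparse :: "nat \<Rightarrow> (int \<Rightarrow> nat) \<Rightarrow> bool" where
  "sparse N \<xi> \<longleftrightarrow> finite {x. \<xi> x \<noteq> 0} \<and> \<xi> 0 \<le> N \<and> (\<forall>x. x \<noteq> 0 \<longrightarrow> \<xi> x \<le> 1)"

definition outer_sites :: "(int \<Rightarrow> nat) \<Rightarrow> int set" where
  "outer_sites \<xi> = {x. x \<noteq> 0 \<and> \<xi> x \<noteq> 0}"

definition inner_birth :: "nat \<Rightarrow> real \<Rightarrow> nat \<Rightarrow> real" where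
  "inner_birth N a k = a / (real N * (real N - 1)) * real k * (real k - 1) * (real N - real k)"

text \<open>
  A patch holding k particles sends offspring to a given patch with j particles within range M
  at rate outer_birth N b M k * (N - j).
\<close>

definition outer_birth :: "nat \<Rightarrow> real \<Rightarrow> nat \<Rightarrow> nat \<Rightarrow> real" where
  "outer_birth N b M k = b / (2 * real M * real N * (real N - 1)) * real k * (real k - 1)"

lemma sparse_admissible: "sparse N \<xi> \<Longrightarrow> N \<ge> 1 \<Longrightarrow> admissible N \<xi>"
  unfolding sparse_def admissible_def by (metis le_trans)

lemma sparse_outer_cases: "sparse N \<xi> \<Longrightarrow> y \<noteq> 0 \<Longrightarrow> \<xi> y = 0 \<or> \<xi> y = 1"
  unfolding sparse_def by (metis le_neq_implies_less less_one)

lemma finite_outer_sites: "sparse N \<xi> \<Longrightarrow> finite (outer_sites \<xi>)"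
  unfolding sparse_def outer_sites_def by (simp add: finite_subset)

lemma birth_rate_origin_sparse:
  assumes "sparse N \<xi>"
  shows "birth_rate N a b M \<xi> 0 = inner_birth N a (\<xi> 0)"
proof -
  have "real (\<xi> y) * (real (\<xi> y) - 1) = 0" if "y \<noteq> 0" for y
    using sparse_outer_cases[OF assms that] by auto
  then show ?thesis
    unfolding birth_rate_def inner_birth_def by (simp add: sum.neutral)
qed

lemma birth_rate_outer_sparse:
  assumes "sparse N \<xi>" "x \<noteq> 0"
  shows "birth_rate N a b M \<xi> x =
    (if \<bar>x\<bar> \<le> int M then outer_birth N b M (\<xi> 0) * (real N - real (\<xi> x)) else 0)"
proof -
  let ?S = "{y. 0 < \<bar>x - y\<bar> \<and> \<bar>x - y\<bar> \<le> int M}"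
  let ?t = "\<lambda>y. b / (2 * real M * real N * (real N - 1)) * real (\<xi> y) * (real (\<xi> y) - 1)
          * (real N - real (\<xi> x))"
  have "finite ?S" by (rule finite_subset[of _ "{x - int M .. x + int M}"]) auto
  have "?t y = 0" if "y \<noteq> 0" for y
    using sparse_outer_cases[OF assms(1) that] by auto
  then have "sum ?t ?S = sum (\<lambda>y. if y = 0 then ?t 0 else 0) ?S"
    by (intro sum.cong) auto
  also have "\<dots> = (if 0 \<in> ?S then ?t 0 else 0)"
    using \<open>finite ?S\<close> by (simp add: sum.delta)
  finally have "sum ?t ?S =
      (if \<bar>x\<bar> \<le> int M then outer_birth N b M (\<xi> 0) * (real N - real (\<xi> x)) else 0)"
    using assms(2) by (simp add: outer_birth_def)
  moreover have "real (\<xi> x) * (real (\<xi> x) - 1) = 0"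
    using sparse_outer_cases[OF assms] by auto
  ultimately show ?thesis
    unfolding birth_rate_def by simp
qed

lemma outer_birth_nonneg: "b \<ge> 0 \<Longrightarrow> N \<ge> 2 \<Longrightarrow> 0 \<le> outer_birth N b M k"
  unfolding outer_birth_def using real_mult_pred_nonneg[of k] by (simp add: mult.assoc)

lemma outer_birth_single: "k \<le> 1 \<Longrightarrow> outer_birth N b M k = 0"
  unfolding outer_birth_def by (cases k) auto

lemma outer_birth_le:
  assumes "b \<ge> 0" "N \<ge> 2" "M \<ge> 1" "k \<le> N"
  shows "outer_birth N b M k \<le> b / (2 * real M)"
proof -
  have N1: "real N * (real N - 1) > 0" using assms by simp
  have "real k * (real k - 1) \<le> real N * (real N - 1)"
    using assms by (cases k) (auto intro: mult_mono)
  then have ratio_le: "real k * (real k - 1) / (real N * (real N - 1)) \<le> 1"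
    using N1 by simp
  have "outer_birth N b M k
      = b / (2 * real M) * (real k * (real k - 1) / (real N * (real N - 1)))"
    unfolding outer_birth_def by (simp add: field_simps)
  also have "\<dots> \<le> b / (2 * real M) * 1"
    using ratio_le assms by (intro mult_left_mono) auto
  finally show ?thesis by simp
qed

lemma outer_birth_window_le:
  assumes "b \<ge> 0" "N \<ge> 2" "M \<ge> 1" "k \<le> N"
  shows "real (2 * M + 1) * outer_birth N b M k \<le> 2 * b"
proof -
  have "real (2 * M + 1) * outer_birth N b M k \<le> real (2 * M + 1) * (b / (2 * real M))"
    using outer_birth_le[OF assms] by (intro mult_left_mono) auto
  also have "\<dots> = b + b / (2 * real M)"
    using assms by (simp add: field_simps)
  also have "\<dots> \<le> b + b / 1"
    using assms by (intro add_left_mono divide_left_mono) auto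
  finally show ?thesis by simp
qed

lemma inner_birth_bounds:
  assumes "a \<ge> 0" "N \<ge> 2" "k \<le> N"
  shows "0 \<le> inner_birth N a k \<and> inner_birth N a k \<le> a * real k"
proof (cases "k = 0")
  case True
  then show ?thesis unfolding inner_birth_def by simp
next
  case False
  have N1: "real N * (real N - 1) > 0" using assms by simp
  define r where "r = ((real k - 1) * (real N - real k)) / (real N * (real N - 1))"
  have e: "inner_birth N a k = a * real k * r"
    unfolding inner_birth_def r_def by (simp add: field_simps)
  have p1: "0 \<le> real k - 1" "0 \<le> real N - real k" using False assms by auto
  have "(real k - 1) * (real N - real k) \<le> real N * (real N - 1)"
    using p1 False assms by (intro mult_mono) auto
  then have "r \<le> 1" unfolding r_def using N1 by simp
  moreover have "0 \<le> r" unfolding r_def using p1 N1 by simp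
  ultimately show ?thesis
    using e assms by (simp add: mult_left_le)
qed

definition origin_potential :: "real \<Rightarrow> nat \<Rightarrow> nat \<Rightarrow> real" where
  "origin_potential a N k = (a + 2) ^ N - (a + 2) ^ (N - k)"

lemma origin_potential_nonneg: "a \<ge> 0 \<Longrightarrow> 0 \<le> origin_potential a N k"
  unfolding origin_potential_def by (simp add: power_increasing)

text \<open>
  A death at the origin lowers the potential by a + 2 times what a birth adds, and births occur
  at most a times as often as deaths: this leaves a drift of at most -2.
\<close>

lemma origin_potential_drift:
  assumes "a \<ge> 0" "N \<ge> 2" "1 \<le> k" "k \<le> N"
  shows "real k * (origin_potential a N (k - 1) - origin_potential a N k)
    + inner_birth N a k * (origin_potential a N (k + 1) - origin_potential a N k) \<le> -2"
proof (cases "k = N")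
  case True
  have "N - (N - 1) = 1" using assms by simp
  then have "real k * (origin_potential a N (k - 1) - origin_potential a N k)
      = - (real N * (a + 1))"
    unfolding origin_potential_def using True by (simp add: algebra_simps)
  moreover have "real N * (a + 1) \<ge> 2 * 1"
    using assms by (intro mult_mono) auto
  moreover have "inner_birth N a k = 0"
    using True by (simp add: inner_birth_def)
  ultimately show ?thesis by simp
next
  case False
  define q where "q = (a + 2) ^ (N - k - 1)"
  have q1: "q \<ge> 1" unfolding q_def using assms by simp
  have "N - k = Suc (N - k - 1)" "N - (k - 1) = Suc (Suc (N - k - 1))" "N - (k + 1) = N - k - 1"
    using False assms by auto
  then have "real k * (origin_potential a N (k - 1) - origin_potential a N k)
      + inner_birth N a k * (origin_potential a N (k + 1) - origin_potential a N k)
      = (a + 1) * q * (inner_birth N a k - real k * (a + 2))"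
    unfolding origin_potential_def q_def by (simp add: algebra_simps)
  also have "\<dots> \<le> (a + 1) * q * (-2 * real k)"
    using inner_birth_bounds[OF assms(1,2,4)] q1 assms
    by (intro mult_left_mono) (auto simp: algebra_simps)
  also have "\<dots> \<le> -2"
  proof -
    have "1 * 1 * 1 \<le> (a + 1) * q * real k"
      using q1 assms by (intro mult_mono) auto
    then show ?thesis by simp
  qed
  finally show ?thesis .
qed

lemma sparse_update_origin:
  assumes "sparse N \<xi>" "j \<le> N"
  shows "sparse N (\<xi>(0 := j)) \<and> outer_sites (\<xi>(0 := j)) = outer_sites \<xi>"
proof -
  have "{y. (\<xi>(0 := j)) y \<noteq> 0} \<subseteq> insert 0 {y. \<xi> y \<noteq> 0}" by auto
  then have "finite {y. (\<xi>(0 := j)) y \<noteq> 0}"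
    using assms unfolding sparse_def by (meson finite_insert finite_subset)
  then show ?thesis
    using assms unfolding sparse_def outer_sites_def by auto
qed

lemma sparse_outer_death:
  assumes "sparse N \<xi>" "x \<noteq> 0"
  shows "sparse N (\<xi>(x := 0)) \<and> outer_sites (\<xi>(x := 0)) = outer_sites \<xi> - {x}"
proof -
  have "{y. (\<xi>(x := 0)) y \<noteq> 0} \<subseteq> {y. \<xi> y \<noteq> 0}" by auto
  then have "finite {y. (\<xi>(x := 0)) y \<noteq> 0}"
    using assms unfolding sparse_def by (meson finite_insert finite_subset)
  then show ?thesis
    using assms unfolding sparse_def outer_sites_def by auto
qed

lemma sparse_outer_birth:
  assumes "sparse N \<xi>" "x \<noteq> 0"
  shows "sparse N (\<xi>(x := 1)) \<and> outer_sites (\<xi>(x := 1)) = insert x (outer_sites \<xi>)"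
proof -
  have "{y. (\<xi>(x := 1)) y \<noteq> 0} \<subseteq> insert x {y. \<xi> y \<noteq> 0}" by auto
  then have "finite {y. (\<xi>(x := 1)) y \<noteq> 0}"
    using assms unfolding sparse_def by (meson finite_insert finite_subset)
  then show ?thesis
    using assms unfolding sparse_def outer_sites_def by auto
qed

lemma not_sparse_outer_double: "x \<noteq> 0 \<Longrightarrow> \<not> sparse N (\<xi>(x := 2))"
  unfolding sparse_def by auto

context patch_model
begin

definition potential :: "real \<Rightarrow> real \<Rightarrow> real \<Rightarrow> (int \<Rightarrow> nat) \<Rightarrow> real" where
  "potential \<alpha> \<beta> v \<xi> =
    (if sparse N \<xi> then \<alpha> * real (card (outer_sites \<xi>)) + \<beta> * origin_potential a N (\<xi> 0) else v)"

lemma potential_nonneg: "\<alpha> \<ge> 0 \<Longrightarrow> \<beta> \<ge> 0 \<Longrightarrow> v \<ge> 0 \<Longrightarrow> 0 \<le> potential \<alpha> \<beta> v \<xi>"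
  unfolding potential_def using origin_potential_nonneg[OF a_nonneg] by auto

lemma site_drift_origin_eq:
  assumes "sparse N \<xi>"
  shows "site_drift N a b M (potential \<alpha> \<beta> v) c \<xi> 0
    = \<beta> * (real (\<xi> 0) * (origin_potential a N (\<xi> 0 - 1) - origin_potential a N (\<xi> 0))
        + inner_birth N a (\<xi> 0) * (origin_potential a N (\<xi> 0 + 1) - origin_potential a N (\<xi> 0)))
      + c * (real (\<xi> 0) + inner_birth N a (\<xi> 0))"
proof -
  define k where "k = \<xi> 0"
  have kN: "k \<le> N" using assms unfolding sparse_def k_def by simp
  define m where "m = real (card (outer_sites \<xi>))"
  have at_origin: "potential \<alpha> \<beta> v (\<xi>(0 := j)) = \<alpha> * m + \<beta> * origin_potential a N j"
    if "j \<le> N" for j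
    using sparse_update_origin[OF assms that] unfolding potential_def m_def by simp
  have current: "potential \<alpha> \<beta> v \<xi> = \<alpha> * m + \<beta> * origin_potential a N k"
    using at_origin[OF kN] by (simp add: k_def)
  have birth: "inner_birth N a k * (potential \<alpha> \<beta> v (\<xi>(0 := Suc k)) - potential \<alpha> \<beta> v \<xi>)
      = inner_birth N a k * (\<beta> * (origin_potential a N (k + 1) - origin_potential a N k))"
  proof (cases "k < N")
    case True
    then show ?thesis using at_origin[of "Suc k"] current by (simp add: algebra_simps)
  next
    case False
    then show ?thesis using kN by (simp add: inner_birth_def)
  qed
  show ?thesis
    unfolding site_drift_def death_rate_def birth_rate_origin_sparse[OF assms]
    using at_origin[of "k - 1"] kN current birth k_def by (simp add: algebra_simps)
qed

lemma site_drift_origin: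
  fixes c :: real
  assumes "sparse N \<xi>" "\<beta> \<ge> 0" "c \<ge> 0"
  shows "site_drift N a b M (potential \<alpha> \<beta> v) c \<xi> 0
    \<le> (if \<xi> 0 = 0 then 0 else -2 * \<beta> + c * N * (1 + a))"
proof (cases "\<xi> 0 = 0")
  case True
  then show ?thesis
    by (simp add: site_drift_origin_eq[OF assms(1)] inner_birth_def)
next
  case False
  define k where "k = \<xi> 0"
  have kN: "k \<le> N" using assms(1) unfolding sparse_def k_def by simp
  have k1: "1 \<le> k" using False k_def by simp
  have "\<beta> * (real k * (origin_potential a N (k - 1) - origin_potential a N k)
      + inner_birth N a k * (origin_potential a N (k + 1) - origin_potential a N k)) \<le> \<beta> * (-2)"
    using origin_potential_drift[OF a_nonneg N_ge_2 k1 kN] assms by (intro mult_left_mono) auto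
  moreover have "inner_birth N a k \<le> a * N"
    using inner_birth_bounds[OF a_nonneg N_ge_2 kN] kN a_nonneg
    by (meson mult_left_mono of_nat_le_iff order_trans)
  then have "c * (real k + inner_birth N a k) \<le> c * (N * (1 + a))"
    using kN assms by (intro mult_left_mono) (auto simp: algebra_simps)
  ultimately show ?thesis
    using False by (simp add: site_drift_origin_eq[OF assms(1)] k_def)
qed

lemma potential_outer_birth:
  assumes "sparse N \<xi>" "x \<noteq> 0" "\<xi> x = 0"
  shows "potential \<alpha> \<beta> v (\<xi>(x := 1)) = potential \<alpha> \<beta> v \<xi> + \<alpha>"
proof -
  have "x \<notin> outer_sites \<xi>" unfolding outer_sites_def using assms(3) by simp
  then have "card (outer_sites (\<xi>(x := 1))) = Suc (card (outer_sites \<xi>))"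
    using sparse_outer_birth[OF assms(1,2)] finite_outer_sites[OF assms(1)] by simp
  then show ?thesis
    using sparse_outer_birth[OF assms(1,2)] assms unfolding potential_def
    by (simp add: algebra_simps)
qed

lemma potential_outer_death:
  assumes "sparse N \<xi>" "x \<noteq> 0" "\<xi> x = 1"
  shows "potential \<alpha> \<beta> v (\<xi>(x := 0)) = potential \<alpha> \<beta> v \<xi> - \<alpha>"
proof -
  have "x \<in> outer_sites \<xi>" unfolding outer_sites_def using assms(2,3) by simp
  then have "card (outer_sites \<xi>) = Suc (card (outer_sites \<xi> - {x}))"
    using finite_outer_sites[OF assms(1)] by (metis card_Suc_Diff1)
  then show ?thesis
    using sparse_outer_death[OF assms(1,2)] assms unfolding potential_def
    by (simp add: algebra_simps)
qed

lemma site_drift_outer: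
  assumes "sparse N \<xi>" "x \<noteq> 0" "\<alpha> \<ge> 0" "\<beta> \<ge> 0" "v \<ge> 0" "c \<ge> 0"
    and escape: "-\<alpha> + c + (real N - 1) * (b / (2 * real M)) * (v + c) \<le> 0"
  shows "site_drift N a b M (potential \<alpha> \<beta> v) c \<xi> x
    \<le> (if \<bar>x\<bar> \<le> int M then N * outer_birth N b M (\<xi> 0) * (\<alpha> + c) else 0)"
proof -
  have kN: "\<xi> 0 \<le> N" using assms(1) unfolding sparse_def by simp
  have birth_coeff_nonneg: "0 \<le> outer_birth N b M (\<xi> 0)"
    using outer_birth_nonneg b_pos N_ge_2 by simp
  consider "\<xi> x = 0" | "\<xi> x = 1" using sparse_outer_cases[OF assms(1,2)] by auto
  then show ?thesis
  proof cases
    case 1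
    then show ?thesis
      unfolding site_drift_def death_rate_def
      using birth_rate_outer_sparse[OF assms(1,2)] potential_outer_birth[OF assms(1,2) 1]
      by (simp add: algebra_simps)
  next
    case 2
    define B where "B = birth_rate N a b M \<xi> x"
    have B_eq: "B = (if \<bar>x\<bar> \<le> int M then outer_birth N b M (\<xi> 0) * (real N - 1) else 0)"
      unfolding B_def using birth_rate_outer_sparse[OF assms(1,2)] 2 by simp
    have B_nonneg: "0 \<le> B" using B_eq birth_coeff_nonneg N_ge_2 by simp
    have B_le: "B \<le> (real N - 1) * (b / (2 * real M))"
      using B_eq mult_left_mono[OF outer_birth_le[OF _ N_ge_2 M_pos kN], of b "real N - 1"]
        N_ge_2 b_pos by (auto simp: mult.commute)
    have double: "potential \<alpha> \<beta> v (\<xi>(x := 2)) = v"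
      using not_sparse_outer_double[OF assms(2)] unfolding potential_def by simp
    have "0 \<le> potential \<alpha> \<beta> v \<xi>" using potential_nonneg assms by simp
    then have "site_drift N a b M (potential \<alpha> \<beta> v) c \<xi> x
        \<le> -\<alpha> + c + B * (v + c)"
      unfolding site_drift_def death_rate_def B_def[symmetric]
      using potential_outer_death[OF assms(1,2) 2] double 2 B_nonneg
      by (simp add: algebra_simps numeral_2_eq_2 mult_left_mono)
    also have "\<dots> \<le> 0"
      using B_le assms escape by (smt (verit) mult_right_mono)
    moreover have "0 \<le> real N * outer_birth N b M (\<xi> 0) * (\<alpha> + c)"
      using birth_coeff_nonneg assms by simp
    ultimately show ?thesis by simp
  qed
qed

text \<open>
  The first side condition handles a singleton outer site, where an outer birth lifts the
  potential to v; the second handles the origin together with the at most 2M + 1 outer sites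
  that an occupied origin can seed.
\<close>

lemma sum_site_drift_nonpos:
  fixes \<alpha> \<beta> v c :: real
  assumes "sparse N \<xi>" "\<alpha> \<ge> 0" "\<beta> \<ge> 0" "v \<ge> 0" "c \<ge> 0"
    and escape: "-\<alpha> + c + (real N - 1) * (b / (2 * real M)) * (v + c) \<le> 0"
    and origin: "-2 * \<beta> + c * N * (1 + a) + N * (\<alpha> + c) * (2 * b) \<le> 0"
  shows "(\<Sum>x\<in>active_sites M \<xi>. site_drift N a b M (potential \<alpha> \<beta> v) c \<xi> x) \<le> 0"
proof -
  let ?A = "active_sites M \<xi>" and ?W = "{x\<in>active_sites M \<xi>. \<bar>x\<bar> \<le> int M}"
  have fin: "finite ?A" using assms(1) finite_active_sites unfolding sparse_def by auto
  define K where "K = N * outer_birth N b M (\<xi> 0) * (\<alpha> + c)"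
  define P0 where "P0 = (if \<xi> 0 = 0 then 0 else -2 * \<beta> + c * N * (1 + a))"
  have K_nonneg: "0 \<le> K" unfolding K_def using outer_birth_nonneg b_pos N_ge_2 assms by simp
  have "site_drift N a b M (potential \<alpha> \<beta> v) c \<xi> x
      \<le> (if x = 0 then P0 else 0) + (if \<bar>x\<bar> \<le> int M then K else 0)" for x
    using site_drift_origin[OF assms(1,3,5), of \<alpha> v]
      site_drift_outer[OF assms(1) _ assms(2-5) escape]
      K_nonneg unfolding K_def[symmetric] P0_def[symmetric] by (cases "x = 0") auto
  then have "(\<Sum>x\<in>?A. site_drift N a b M (potential \<alpha> \<beta> v) c \<xi> x)
      \<le> (\<Sum>x\<in>?A. (if x = 0 then P0 else 0) + (if \<bar>x\<bar> \<le> int M then K else 0))"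
    by (intro sum_mono)
  also have "\<dots> = (if 0 \<in> ?A then P0 else 0) + real (card ?W) * K"
    using fin by (simp add: sum.distrib sum.inter_filter[symmetric])
  finally have bound: "(\<Sum>x\<in>?A. site_drift N a b M (potential \<alpha> \<beta> v) c \<xi> x)
      \<le> (if 0 \<in> ?A then P0 else 0) + real (card ?W) * K" .
  show ?thesis
  proof (cases "\<xi> 0 = 0")
    case True
    then show ?thesis
      using bound outer_birth_single[of "\<xi> 0"] unfolding K_def P0_def by (simp split: if_split_asm)
  next
    case False
    then have "0 \<in> ?A" unfolding active_sites_def by force
    have "card ?W \<le> card {- int M .. int M}"
      by (rule card_mono) auto
    then have "real (card ?W) * K \<le> real (2 * M + 1) * K"
      using K_nonneg by (intro mult_right_mono) auto
    also have "\<dots> = N * (\<alpha> + c) * (real (2 * M + 1) * outer_birth N b M (\<xi> 0))"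
      unfolding K_def by (simp add: algebra_simps)
    also have "\<dots> \<le> N * (\<alpha> + c) * (2 * b)"
      using outer_birth_window_le[OF _ N_ge_2 M_pos] assms(1) b_pos assms
      by (intro mult_left_mono) (auto simp: sparse_def)
    finally show ?thesis
      using bound origin False \<open>0 \<in> ?A\<close> unfolding P0_def by simp
  qed
qed

lemma jump_mean_potential_le:
  fixes \<alpha> \<beta> v c :: real
  assumes "sparse N \<xi>" "\<xi> \<noteq> (\<lambda>_. 0)" "\<alpha> \<ge> 0" "\<beta> \<ge> 0" "v \<ge> 0" "c \<ge> 0"
    and "-\<alpha> + c + (real N - 1) * (b / (2 * real M)) * (v + c) \<le> 0"
    and "-2 * \<beta> + c * N * (1 + a) + N * (\<alpha> + c) * (2 * b) \<le> 0"
  shows "jump_mean N a b M (potential \<alpha> \<beta> v) \<xi> \<le> potential \<alpha> \<beta> v \<xi> - c"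
  using N_ge_2 assms
  by (intro jump_mean_le_of_site_drift total_rate_pos sparse_admissible sum_site_drift_nonpos) auto

lemma survival_prob_le_inverse_M:
  "survival_prob N a b M \<le> (b * N)\<^sup>2 * ((a + 2) ^ N - 1) / M"
proof -
  let ?T = "potential (1 + b * N) (N * (1 + a) + b * N * (2 + b * N)) 0"
  let ?H = "potential (b * N / M) ((b * N)\<^sup>2 / M) 1"
  have init_sparse: "sparse N (init_config N)"
    unfolding sparse_def init_config_def by auto
  have "survival_prob N a b M \<le> ?H (init_config N)"
  proof (rule survival_prob_le_potential[where G = "sparse N"])
    fix \<eta> assume "sparse N \<eta>" "\<eta> \<noteq> (\<lambda>_. 0)"
    moreover have "(real N - 1) * (b / (2 * real M)) \<le> real N * b"
      using N_ge_2 M_pos b_pos by (intro mult_mono) (auto simp: field_simps)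
    moreover have "- real N \<le> a * real N"
      using a_nonneg by (smt (verit) mult_nonneg_nonneg of_nat_0_le_iff)
    ultimately show "jump_mean N a b M ?T \<eta> \<le> ?T \<eta> - 1"
      using jump_mean_potential_le[of \<eta> "1 + b * N" "N * (1 + a) + b * N * (2 + b * N)" 0 1]
        a_nonneg b_pos by (simp add: algebra_simps)
  next
    fix \<eta> assume "sparse N \<eta>" "\<eta> \<noteq> (\<lambda>_. 0)"
    moreover have "(real N - 1) * (b / (2 * real M)) \<le> b * N / M"
      using N_ge_2 M_pos b_pos by (simp add: field_simps)
    ultimately show "jump_mean N a b M ?H \<eta> \<le> ?H \<eta>"
      using jump_mean_potential_le[of \<eta> "b * N / M" "(b * N)\<^sup>2 / M" 1 0] a_nonneg b_pos
      by (simp add: power2_eq_square algebra_simps)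
  next
    show "admissible N (init_config N)"
      using init_sparse N_ge_2 by (simp add: sparse_admissible)
  next
    show "0 \<le> ?T \<eta>" "0 \<le> ?H \<eta>" for \<eta>
      using a_nonneg b_pos by (auto intro!: potential_nonneg)
    show "1 \<le> ?H \<eta>" if "\<not> sparse N \<eta>" for \<eta>
      using that by (simp add: potential_def)
  qed
  also have "?H (init_config N) = (b * N)\<^sup>2 * ((a + 2) ^ N - 1) / M"
    using init_sparse unfolding potential_def origin_potential_def outer_sites_def init_config_def
    by simp
  finally show ?thesis .
qed

end

lemma div_le_half_powr_neg_third:
  fixes C :: real and M :: nat
  assumes "C \<ge> 0" and "real M \<ge> (2 * C + 1) ^ 3"
  shows "C / real M \<le> real M powr (-1/3) / 2"
proof -
  define t where "t = real M powr (1/3)"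
  have "real M \<ge> 1"
    using assms by (smt (verit) one_le_power)
  then have t_pos: "t > 0" and t_cube: "t ^ 3 = real M" and "real M powr (-1/3) = 1 / t"
    unfolding t_def by (simp_all add: powr_power powr_minus_divide)
  have "2 * C + 1 \<le> t"
  proof (rule ccontr)
    assume "\<not> 2 * C + 1 \<le> t"
    then have "t ^ 3 < (2 * C + 1) ^ 3"
      using t_pos by (intro power_strict_mono) auto
    then show False
      using assms t_cube by simp
  qed
  moreover have "t * 1 \<le> t * t"
    using calculation assms(1) t_pos by (intro mult_left_mono) auto
  ultimately have "2 * C \<le> t ^ 2"
    by (simp add: power2_eq_square)
  then have "C / t ^ 3 \<le> (1 / t) / 2"
    using t_pos by (simp add: field_simps power3_eq_cube power2_eq_square)
  then show ?thesis
    using t_cube \<open>real M powr (-1/3) = 1 / t\<close> by simp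
qed

lemma eventually_survival_prob_le_powr_neg_third:
  assumes "a \<ge> 0" and "b > 0" and "N \<ge> 2"
  shows "\<exists>M0. \<forall>M\<ge>M0. survival_prob N a b M \<le> real M powr (-1/3) / 2"
proof (intro exI allI impI)
  define C where "C = (b * N)\<^sup>2 * ((a + 2) ^ N - 1)"
  have "C \<ge> 0"
    using assms by (simp add: C_def)
  fix M :: nat
  assume "nat \<lceil>(2 * C + 1) ^ 3\<rceil> \<le> M"
  then have M_large: "(2 * C + 1) ^ 3 \<le> real M"
    by (simp add: nat_ceiling_le_eq)
  moreover have "(1::real) \<le> (2 * C + 1) ^ 3"
    using \<open>C \<ge> 0\<close> by (simp add: one_le_power)
  ultimately interpret patch_model N a b M
    using assms by unfold_locales auto
  have "survival_prob N a b M \<le> C / M"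
    unfolding C_def by (rule survival_prob_le_inverse_M)
  also have "\<dots> \<le> real M powr (-1/3) / 2"
    using \<open>C \<ge> 0\<close> M_large by (rule div_le_half_powr_neg_third)
  finally show "survival_prob N a b M \<le> real M powr (-1/3) / 2" .
qed

theorem theorem2p6:
  fixes a b :: real and N :: nat
  assumes "a \<ge> 0" and "b > 0" and "N \<ge> 2"
  shows "\<exists>M0::nat. \<forall>M\<ge>M0. survival_prob N a b M \<le>
    (if a < 4 then real M powr (-1/3) * (1/2 + b * real N / (1 - a/4))
     else if a = 4 then real M powr (-1/3) * (1/2 + (b/2) * (real N + 2)^2)
     else real M powr (-1/3) * (1/2 + b / (a/4 - 1)^2 * (a/4)^(N+2)))"
proof -
  obtain M0 where M0: "\<And>M. M \<ge> M0 \<Longrightarrow> survival_prob N a b M \<le> real M powr (-1/3) / 2"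
    using eventually_survival_prob_le_powr_neg_third[OF assms] by blast
  have relax: "real M powr (-1/3) / 2 \<le> real M powr (-1/3) * (1/2 + Y)" if "Y \<ge> 0" for M :: nat and Y
    using that by (simp add: algebra_simps)
  show ?thesis
  proof (intro exI[of _ M0] allI impI order_trans[OF M0])
    show "real M powr (-1/3) / 2 \<le>
        (if a < 4 then real M powr (-1/3) * (1/2 + b * real N / (1 - a/4))
         else if a = 4 then real M powr (-1/3) * (1/2 + (b/2) * (real N + 2)^2)
         else real M powr (-1/3) * (1/2 + b / (a/4 - 1)^2 * (a/4)^(N+2)))" for M :: nat
      using assms by (simp only: split: if_split) (intro conjI impI relax; simp)
  qed
qed

end
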